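(* Let $b\ge 2$ and $n\ge 0$ be integers. Then $T_b(n)=\langle\{s_0,s_1,\dots,s_{n+1}\}\rangle$, and $\{s_0,s_1,\dots,s_{n+1}\}$ is the minimal system of generators of $T_b(n)$. In particular the embedding dimension is $e(T_b(n))=n+2$.
   Context: For integers $b\ge 2$, $n\ge 0$, $i\ge0$ put $s_i=(b+1)b^{n+i}-1$ and $T_b(n)=\langle\{s_i:i\in\mathbb{N}\}\rangle$, the submonoid of $(\mathbb{N},+)$ generated by the $s_i$. A set $A$ is a system of generators of a numerical semigroup $S$ if $S=\langle A\rangle$; it is minimal if no proper subset of $A$ generates $S$ (every numerical semigroup has a unique minimal system of generators, which is finite). The embedding dimension $e(S)$ is the cardinality of the minimal system of generators. *)

theory Defs
  imports Main
begin

inductive_set monoid_gen :: "nat set \<Rightarrow> nat set" for A :: "nat set" where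
  zero: "0 \<in> monoid_gen A"
| add: "a \<in> A \<Longrightarrow> x \<in> monoid_gen A \<Longrightarrow> a + x \<in> monoid_gen A"

definition is_min_gen_sys :: "nat set \<Rightarrow> nat set \<Rightarrow> bool" where
  "is_min_gen_sys A S \<longleftrightarrow> monoid_gen A = S \<and> (\<forall>B. B \<subset> A \<longrightarrow> monoid_gen B \<noteq> S)"

definition embedding_dim :: "nat set \<Rightarrow> nat" where
  "embedding_dim S = card (THE A. is_min_gen_sys A S)"

definition s_gen :: "nat \<Rightarrow> nat \<Rightarrow> nat \<Rightarrow> nat" where
  "s_gen b n i = (b + 1) * b ^ (n + i) - 1"

definition T_sg :: "nat \<Rightarrow> nat \<Rightarrow> nat set" where
  "T_sg b n = monoid_gen (range (s_gen b n))"

end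

theory Submission
  imports Defs
begin

text \<open>
  Put c = (b + 1) b^n, so that s_i + 1 = c b^i and s_(i+1) = b s_i + (b - 1).
  A direct computation writes s_(n+2) = x s_0 + y s_1 with x \<ge> 2, and the recurrence
  propagates such a representation to every larger index; hence s_0, ..., s_(n+1) generate.
  They are irredundant because each of them is congruent to -1 modulo c and lies in
  [c - 1, c^2 - 1): a sum of m of them is congruent to -m, so a generator that is a sum of
  m \<ge> 2 others forces m \<equiv> 1 (mod c), i.e. m \<ge> c + 1, and would be at least (c + 1)(c - 1).
  A minimal system of generators consists exactly of the atoms, so it is unique and the
  embedding dimension is n + 2.
\<close>

lemma monoid_gen_base: "a \<in> A \<Longrightarrow> a \<in> monoid_gen A"
  using monoid_gen.add[OF _ monoid_gen.zero] by simp

lemma monoid_gen_add_closed: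
  "x \<in> monoid_gen A \<Longrightarrow> y \<in> monoid_gen A \<Longrightarrow> x + y \<in> monoid_gen A"
  by (induction x rule: monoid_gen.induct) (auto simp: add.assoc intro: monoid_gen.add)

lemma monoid_gen_mult_closed: "x \<in> monoid_gen A \<Longrightarrow> k * x \<in> monoid_gen A"
  by (induction k) (auto intro: monoid_gen_add_closed monoid_gen.zero)

lemma monoid_gen_least:
  assumes "A \<subseteq> monoid_gen B"
  shows "monoid_gen A \<subseteq> monoid_gen B"
proof
  fix x assume "x \<in> monoid_gen A"
  then show "x \<in> monoid_gen B"
    by (induction x rule: monoid_gen.induct) (use assms in \<open>auto intro: monoid_gen_add_closed monoid_gen.zero\<close>)
qed

lemma monoid_gen_mono: "A \<subseteq> B \<Longrightarrow> monoid_gen A \<subseteq> monoid_gen B"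
  by (rule monoid_gen_least) (auto intro: monoid_gen_base)

lemma monoid_gen_eq_sum_list: "monoid_gen A = {sum_list xs | xs. set xs \<subseteq> A}"
proof (intro equalityI subsetI)
  fix x assume "x \<in> monoid_gen A"
  then show "x \<in> {sum_list xs | xs. set xs \<subseteq> A}"
  proof (induction x rule: monoid_gen.induct)
    case zero
    show ?case by (intro CollectI exI[of _ "[]"]) simp
  next
    case (add a x)
    then obtain xs where "x = sum_list xs" "set xs \<subseteq> A" by blast
    with add.hyps show ?case by (intro CollectI exI[of _ "a # xs"]) simp
  qed
next
  fix x assume "x \<in> {sum_list xs | xs. set xs \<subseteq> A}"
  then obtain xs where "x = sum_list xs" "set xs \<subseteq> A" by blast
  then show "x \<in> monoid_gen A"
    by (induction xs arbitrary: x) (auto intro: monoid_gen.zero monoid_gen.add)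
qed

lemma monoid_gen_below: "x \<in> monoid_gen A \<Longrightarrow> x \<in> monoid_gen {a \<in> A. a \<le> x}"
  unfolding monoid_gen_eq_sum_list by (fastforce intro: member_le_sum_list)

lemma is_min_gen_sys_iff:
  "is_min_gen_sys A S \<longleftrightarrow> monoid_gen A = S \<and> (\<forall>a\<in>A. a \<notin> monoid_gen (A - {a}))"
proof
  assume min: "is_min_gen_sys A S"
  then have S: "monoid_gen A = S" unfolding is_min_gen_sys_def by simp
  have "a \<notin> monoid_gen (A - {a})" if "a \<in> A" for a
  proof
    assume "a \<in> monoid_gen (A - {a})"
    then have "A \<subseteq> monoid_gen (A - {a})" by (auto intro: monoid_gen_base)
    then have "monoid_gen (A - {a}) = S"
      using S monoid_gen_least[of A] monoid_gen_mono[of "A - {a}" A] by blast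
    moreover have "A - {a} \<subset> A" using that by blast
    ultimately show False using min unfolding is_min_gen_sys_def by blast
  qed
  with S show "monoid_gen A = S \<and> (\<forall>a\<in>A. a \<notin> monoid_gen (A - {a}))" by blast
next
  assume S: "monoid_gen A = S \<and> (\<forall>a\<in>A. a \<notin> monoid_gen (A - {a}))"
  have "monoid_gen B \<noteq> S" if "B \<subset> A" for B
  proof -
    obtain a where "a \<in> A" "B \<subseteq> A - {a}" using \<open>B \<subset> A\<close> by blast
    then show ?thesis
      using S monoid_gen_mono[of B "A - {a}"] monoid_gen_base[of a A] by blast
  qed
  with S show "is_min_gen_sys A S" unfolding is_min_gen_sys_def by blast
qed

definition atoms :: "nat set \<Rightarrow> nat set" where
  "atoms S = {x \<in> S. x \<noteq> 0 \<and> \<not> (\<exists>y\<in>S. \<exists>z\<in>S. y \<noteq> 0 \<and> z \<noteq> 0 \<and> x = y + z)}"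

lemma min_gen_sys_eq_atoms:
  assumes "is_min_gen_sys A S"
  shows "A = atoms S"
proof
  have S: "monoid_gen A = S" and irred: "\<And>a. a \<in> A \<Longrightarrow> a \<notin> monoid_gen (A - {a})"
    using assms unfolding is_min_gen_sys_iff by blast+
  have no_zero: "0 \<notin> A" using irred monoid_gen.zero by blast
  show "A \<subseteq> atoms S"
  proof
    fix a assume a: "a \<in> A"
    have small: "w \<in> monoid_gen (A - {a})" if "w \<in> S" "w < a" for w
    proof -
      have "w \<in> monoid_gen {a' \<in> A. a' \<le> w}" using that(1) S monoid_gen_below by blast
      moreover have "monoid_gen {a' \<in> A. a' \<le> w} \<subseteq> monoid_gen (A - {a})"
        using that(2) by (intro monoid_gen_mono) auto
      ultimately show ?thesis by blast
    qed
    have "a \<noteq> y + z" if "y \<in> S" "z \<in> S" "y \<noteq> 0" "z \<noteq> 0" for y z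
    proof
      assume "a = y + z"
      then have "a \<in> monoid_gen (A - {a})"
        using that small[of y] small[of z] by (simp add: monoid_gen_add_closed)
      then show False using irred[OF a] by blast
    qed
    moreover have "a \<in> S" using a S monoid_gen_base by blast
    moreover have "a \<noteq> 0" using a no_zero by metis
    ultimately show "a \<in> atoms S" unfolding atoms_def by blast
  qed
  show "atoms S \<subseteq> A"
  proof
    fix x assume x: "x \<in> atoms S"
    then have "x \<in> monoid_gen A" "x \<noteq> 0" using S unfolding atoms_def by auto
    then obtain a x' where ax': "x = a + x'" "a \<in> A" "x' \<in> monoid_gen A"
      by (cases rule: monoid_gen.cases) auto
    have "x' = 0"
    proof (rule ccontr)
      assume "x' \<noteq> 0"
      moreover have "a \<noteq> 0" using ax'(2) no_zero by metis
      moreover have "a \<in> S" "x' \<in> S" using ax'(2,3) S monoid_gen_base by blast+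
      ultimately show False using x ax'(1) unfolding atoms_def by blast
    qed
    then show "x \<in> A" using ax' by simp
  qed
qed

lemma embedding_dim_eq_card: "is_min_gen_sys A S \<Longrightarrow> embedding_dim S = card A"
  unfolding embedding_dim_def
  by (metis (mono_tags, lifting) min_gen_sys_eq_atoms the_equality)

lemma sum_list_of_congruent:
  fixes c :: nat
  assumes "\<forall>a\<in>set xs. c dvd a + 1 \<and> c \<le> a + 1"
  shows "c dvd sum_list xs + length xs" and "length xs * (c - 1) \<le> sum_list xs"
  using assms
proof (induction xs)
  case (Cons a xs)
  { case 1
    have "sum_list (a # xs) + length (a # xs) = (a + 1) + (sum_list xs + length xs)" by simp
    with 1 Cons.IH(1) show ?case by (metis dvd_add list.set_intros)
  }
  { case 2 with Cons.IH(2) show ?case by auto }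
qed simp_all

lemma congruent_not_in_monoid_gen_remove:
  fixes c :: nat
  assumes cong: "\<forall>a\<in>A. c dvd a + 1 \<and> c \<le> a + 1 \<and> a + 1 < c * c" and a: "a \<in> A"
  shows "a \<notin> monoid_gen (A - {a})"
proof
  assume "a \<in> monoid_gen (A - {a})"
  then obtain xs where xs: "a = sum_list xs" "set xs \<subseteq> A - {a}"
    unfolding monoid_gen_eq_sum_list by blast
  define m where "m = length xs"
  have "\<forall>x\<in>set xs. c dvd x + 1 \<and> c \<le> x + 1" using cong xs(2) by blast
  then have dvd: "c dvd a + m" and bound: "m * (c - 1) \<le> a"
    using sum_list_of_congruent[of xs c] xs(1) unfolding m_def by simp_all
  have ca: "c dvd a + 1" "c \<le> a + 1" "a + 1 < c * c" using cong a by simp_all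
  have "c \<ge> 2"
  proof (rule ccontr)
    assume "\<not> c \<ge> 2"
    then have "c * c \<le> c" by (cases "c = 0") auto
    with ca show False by linarith
  qed
  have "m \<noteq> 0" using xs(1) ca(2) \<open>c \<ge> 2\<close> unfolding m_def by auto
  moreover have "m \<noteq> 1"
  proof
    assume "m = 1"
    then obtain x where "xs = [x]" unfolding m_def by (cases xs) auto
    then show False using xs by simp
  qed
  ultimately have "m \<ge> 2" by linarith
  have "c dvd (a + m) - (a + 1)" using dvd ca(1) by (rule dvd_diff_nat)
  then have "c \<le> m - 1" using \<open>m \<ge> 2\<close> by (intro dvd_imp_le) auto
  then have "(c + 1) * (c - 1) \<le> m * (c - 1)"
    using \<open>m \<ge> 2\<close> by (intro mult_le_mono1) linarith
  also have "\<dots> \<le> a" by (rule bound)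
  finally have "c * c \<le> a + 1" using \<open>c \<ge> 2\<close> by (simp add: algebra_simps)
  then show False using ca(3) by linarith
qed

lemma geometric_sum_Suc: "k * (\<Sum>i<n. Suc k ^ i) + 1 = Suc k ^ n"
  by (induction n) (auto simp: algebra_simps)

lemma s_gen_plus_one:
  assumes "b \<ge> 1"
  shows "s_gen b n i + 1 = (b + 1) * b ^ n * b ^ i"
  using assms unfolding s_gen_def by (simp add: power_add algebra_simps Suc_le_eq)

lemma s_gen_in_span_base:
  fixes b n :: nat
  assumes "b \<ge> 2"
  shows "\<exists>x\<ge>2. \<exists>y. s_gen b n (n + 2) = x * s_gen b n 0 + y * s_gen b n 1"
proof -
  define c where "c = (b + 1) * b ^ n"
  define g where "g = (\<Sum>i<n. b ^ i)"
  define y where "y = g + 1"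
  define x where "x = 1 + c * (b - 1) - y"
  \<comment> \<open>Comparing x s_0 + y s_1 = c (x + b y) - (x + y) with c b^(n+2) - 1 dictates these choices.\<close>
  have geom: "(b - 1) * g + 1 = b ^ n"
    using geometric_sum_Suc[of "b - 1" n] assms unfolding g_def by simp
  have "g \<le> (b - 1) * g" using assms by (simp add: Suc_le_eq)
  then have "y \<le> b ^ n" using geom unfolding y_def by linarith
  moreover have "3 * b ^ n \<le> c" unfolding c_def using assms by (intro mult_le_mono1) simp
  moreover have "c \<le> c * (b - 1)" using assms by (simp add: Suc_le_eq)
  moreover have "1 \<le> b ^ n" using assms by simp
  ultimately have "y + 1 \<le> c * (b - 1)" by linarith
  then have x2: "x \<ge> 2" and xy: "x + y = 1 + c * (b - 1)" unfolding x_def by simp_all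
  have s: "int (s_gen b n i) = int c * int b ^ i - 1" for i
  proof -
    have "int (s_gen b n i + 1) = int (c * b ^ i)"
      using s_gen_plus_one[of b n i] assms unfolding c_def by simp
    then show ?thesis by simp
  qed
  have X: "int x = 1 + int c * (int b - 1) - int y"
    using arg_cong[OF xy, of int] assms by (simp add: of_nat_diff)
  have "int (x * s_gen b n 0 + y * s_gen b n 1) = int x * (int c - 1) + int y * (int c * int b - 1)"
    by (simp add: s)
  also have "\<dots> = int c - 1 + int c * ((int b - 1) * int c + (int b - 1) * int g)"
    unfolding X y_def by (simp add: algebra_simps)
  also have "\<dots> = int c * int b ^ (n + 2) - 1"
  proof -
    have "(int b - 1) * int g = int b ^ n - 1"
      using arg_cong[OF geom, of int] assms by (simp add: of_nat_diff)
    then have "(int b - 1) * int c + (int b - 1) * int g = (int b - 1) * ((int b + 1) * int b ^ n) + (int b ^ n - 1)"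
      unfolding c_def by (simp add: distrib_right)
    also have "\<dots> = int b ^ (n + 2) - 1"
      by (simp add: algebra_simps power_add power2_eq_square)
    finally have "(int b - 1) * int c + (int b - 1) * int g = int b ^ (n + 2) - 1" .
    then show ?thesis by (simp add: right_diff_distrib)
  qed
  finally have "s_gen b n (n + 2) = x * s_gen b n 0 + y * s_gen b n 1"
    using s[of "n + 2"] by linarith
  then show ?thesis using x2 by blast
qed

lemma s_gen_strict_mono:
  assumes "b \<ge> 2"
  shows "strict_mono (s_gen b n)"
proof (rule strict_monoI)
  fix i j :: nat assume "i < j"
  then have "b ^ i < b ^ j" using assms by (intro power_strict_increasing) auto
  then have "(b + 1) * b ^ n * b ^ i < (b + 1) * b ^ n * b ^ j" using assms by simp
  then have "s_gen b n i + 1 < s_gen b n j + 1" using s_gen_plus_one[of b n] assms by simp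
  then show "s_gen b n i < s_gen b n j" by simp
qed

lemma s_gen_Suc:
  assumes "b \<ge> 1"
  shows "s_gen b n (Suc i) + b * s_gen b n 0 = b * s_gen b n i + s_gen b n 1"
proof -
  have "s_gen b n (Suc i) + b * s_gen b n 0 + (1 + b) = (s_gen b n (Suc i) + 1) + b * (s_gen b n 0 + 1)"
    by (simp add: algebra_simps)
  also have "\<dots> = b * (s_gen b n i + 1) + (s_gen b n 1 + 1)"
    unfolding s_gen_plus_one[OF assms] by (simp add: algebra_simps)
  also have "\<dots> = b * s_gen b n i + s_gen b n 1 + (1 + b)"
    by (simp add: algebra_simps)
  finally show ?thesis by simp
qed

lemma s_gen_in_span:
  assumes "b \<ge> 2" and "n + 2 \<le> m"
  shows "\<exists>x\<ge>2. \<exists>y. s_gen b n m = x * s_gen b n 0 + y * s_gen b n 1"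
  using assms(2)
proof (induction m rule: dec_induct)
  case base
  show ?case using s_gen_in_span_base[OF assms(1)] .
next
  case (step m)
  then obtain x y where x: "x \<ge> 2" and s: "s_gen b n m = x * s_gen b n 0 + y * s_gen b n 1"
    by blast
  then obtain x' where x': "x = Suc x'" "x' \<ge> 1" by (cases x) auto
  have "s_gen b n (Suc m) + b * s_gen b n 0 = b * x' * s_gen b n 0 + (b * y + 1) * s_gen b n 1 + b * s_gen b n 0"
    using s_gen_Suc[of b n m] assms(1) unfolding s x' by (simp add: algebra_simps)
  then have "s_gen b n (Suc m) = b * x' * s_gen b n 0 + (b * y + 1) * s_gen b n 1" by simp
  moreover have "b * x' \<ge> 2" using mult_le_mono[of 2 b 1 x'] assms(1) x'(2) by simp
  ultimately show ?case by blast
qed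

lemma T_sg_eq_finitely_generated:
  assumes "b \<ge> 2"
  shows "T_sg b n = monoid_gen (s_gen b n ` {0..n + 1})"
proof
  let ?G = "s_gen b n ` {0..n + 1}"
  have "s_gen b n m \<in> monoid_gen ?G" for m
  proof (cases "m \<le> n + 1")
    case True
    then show ?thesis by (auto intro: monoid_gen_base)
  next
    case False
    then obtain x y where "s_gen b n m = x * s_gen b n 0 + y * s_gen b n 1"
      using s_gen_in_span[OF assms, of n m] by auto
    moreover have "s_gen b n 0 \<in> monoid_gen ?G" "s_gen b n 1 \<in> monoid_gen ?G"
      by (auto intro: monoid_gen_base)
    ultimately show ?thesis by (simp add: monoid_gen_add_closed monoid_gen_mult_closed)
  qed
  then show "T_sg b n \<subseteq> monoid_gen ?G" unfolding T_sg_def by (intro monoid_gen_least) auto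
  show "monoid_gen ?G \<subseteq> T_sg b n" unfolding T_sg_def by (intro monoid_gen_mono) auto
qed

lemma s_gen_congruent:
  assumes "b \<ge> 2" and "i \<le> n + 1"
  defines "c \<equiv> (b + 1) * b ^ n"
  shows "c dvd s_gen b n i + 1 \<and> c \<le> s_gen b n i + 1 \<and> s_gen b n i + 1 < c * c"
proof -
  have s: "s_gen b n i + 1 = c * b ^ i" using s_gen_plus_one[of b n i] assms unfolding c_def by simp
  have "b ^ i \<le> b ^ (n + 1)" using assms by (intro power_increasing) auto
  also have "\<dots> < c" unfolding c_def using assms by simp
  finally have "c * b ^ i < c * c" using assms unfolding c_def by simp
  moreover have "c \<le> c * b ^ i" using assms by simp
  ultimately show ?thesis unfolding s by simp
qed

lemma is_min_gen_sys_T_sg: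
  assumes "b \<ge> 2"
  shows "is_min_gen_sys (s_gen b n ` {0..n + 1}) (T_sg b n)"
  unfolding is_min_gen_sys_iff
proof
  show "monoid_gen (s_gen b n ` {0..n + 1}) = T_sg b n"
    using T_sg_eq_finitely_generated[OF assms] by simp
  show "\<forall>a\<in>s_gen b n ` {0..n + 1}. a \<notin> monoid_gen (s_gen b n ` {0..n + 1} - {a})"
    using s_gen_congruent[OF assms]
    by (intro ballI congruent_not_in_monoid_gen_remove[of _ "(b + 1) * b ^ n"]) auto
qed

theorem mainTheorem4:
  fixes b n :: nat
  assumes "b \<ge> 2"
  shows "T_sg b n = monoid_gen (s_gen b n ` {0..n+1})
       \<and> is_min_gen_sys (s_gen b n ` {0..n+1}) (T_sg b n)
       \<and> embedding_dim (T_sg b n) = n + 2"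
proof (intro conjI)
  show "T_sg b n = monoid_gen (s_gen b n ` {0..n+1})"
    using T_sg_eq_finitely_generated[OF assms] .
  show min: "is_min_gen_sys (s_gen b n ` {0..n+1}) (T_sg b n)"
    using is_min_gen_sys_T_sg[OF assms] .
  have "inj (s_gen b n)" using s_gen_strict_mono[OF assms] by (rule strict_mono_imp_inj_on)
  then have "card (s_gen b n ` {0..n+1}) = n + 2" by (simp add: card_image inj_on_subset)
  then show "embedding_dim (T_sg b n) = n + 2" using embedding_dim_eq_card[OF min] by simp
qed

end
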